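(* Assume the well-posedness and controllability assumptions below. Then the rotated problem $\bar{\mathbb{P}}(x,\theta)$ is recursively feasible (if it is feasible at $(x_k,\theta_k)$, it is feasible at $(x_{k+1},\theta_{k+1})$ for the closed-loop successor state and any $\theta_{k+1}\in\mathcal{C}(\theta_k)$) and it has the same set of minimizers as $\mathbb{P}(x,\theta)$. Let $\tilde\kappa_N$ be the receding horizon control law of $\bar{\mathbb{P}}$ and $\widetilde V_N^\star$ its optimal value. If moreover the strict stochastic dissipativity assumption below holds, then along the closed loop $x_{k+1}=f(x_k,\tilde\kappa_N(x_k,\theta_k),\theta_k)$, $$\mathcal{L}\widetilde V_N^\star(x_k,\theta_k):=\mathbb{E}[\widetilde V_N^\star(x_{k+1},\theta_{k+1})-\widetilde V_N^\star(x_k,\theta_k)\mid\mathfrak{F}_k]\le-\rho(x_k,\theta_k),$$ where $\rho:\mathbb{R}^n\times\mathcal{N}\to\mathbb{R}_+$ is positive definite in its first argument with respect to $x_s$.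
   Context: Setting: $\mathcal{N}=\{1,\dots,\nu\}$; $\{\theta_k\}$ a time-homogeneous Markov chain on $\mathcal{N}$ with transition matrix $P=(p_{ij})$ on a filtered probability space $(\Omega,\mathfrak{F},\{\mathfrak{F}_k\},\mathbb{P})$, $\mathfrak{F}_k$ generated by the history up to time $k$; system $x_{k+1}=f(x_k,u_k,\theta_k)$ ($x_k\in\mathbb{R}^n$, $u_k\in\mathbb{R}^m$, $x_k,\theta_k$ measured at time $k$); constraints $(x_k,u_k)\in Y_{\theta_k}$; stage cost $\ell$. $u\lhd\mathfrak{F}_k$ means $\mathfrak{F}_k$-measurable. Cover $\mathcal{C}(i)=\{j:p_{ij}>0\}$; bet node $\mathrm{bet}(i)\in\mathcal{C}(i)$ maximizing $p_{ij}$ over $j\in\mathcal{C}(i)$. Well-posedness: each $\ell(\cdot,\cdot,\theta)$ nonnegative, lower semicontinuous, level-bounded in $u$ locally uniformly in $x$; $f(\cdot,\cdot,\theta)$ continuous; $Y_\theta$ nonempty compact; chain irreducible and aperiodic. Optimal steady states $(x_s^\theta,u_s^\theta)$ minimize $\ell(x,u,\theta)$ s.t. $f(x,u,\theta)=x$, $(x,u)\in Y_\theta$, with value $\ell_s(\theta)$. Controllability: for all $i,j$ there is $\bar u_s^{i,j}$ with $(x_s^i,\bar u_s^{i,j})\in Y_j$, $f(x_s^i,\bar u_s^{i,j},j)=x_s^{\mathrm{bet}(j)}$. Common optimal equilibrium: there is one optimal steady state $(x_s,u_s)=(0,0)$ common to all modes; $\ell_s$ denotes the corresponding optimal steady-state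 cost (treated as a single value). Strict stochastic dissipativity assumption: in addition to the common optimal equilibrium, there are a function $\lambda:\mathbb{R}^n\times\mathcal{N}\to\mathbb{R}$, lower semicontinuous in its first argument, with $\lambda(x_s,\theta)=\lambda_s$ independent of $\theta$, and a convex $\rho:\mathbb{R}^n\times\mathcal{N}\to\mathbb{R}_+$, positive definite with respect to $x_s$ ($\rho(x_s,\theta)=0$, $\rho(x,\theta)>0$ for $x\ne x_s$), such that for all states, inputs and modes $\mathcal{L}\lambda(x_k,\theta_k)\le \ell(x_k,u_k,\theta_k)-\ell_s-\rho(x_k,\theta_k)$, where $\mathcal{L}\lambda(x_k,\theta_k):=\mathbb{E}[\lambda(x_{k+1},\theta_{k+1})-\lambda(x_k,\theta_k)\mid\mathfrak{F}_k]$ with $x_{k+1}=f(x_k,u_k,\theta_k)$. Rotated stage cost: $L(x_k,u_k,\theta_k):=\ell(x_k,u_k,\theta_k)-\mathcal{L}\lambda(x_k,\theta_k)$. Problem $\mathbb{P}(x,\theta)$: minimize $\mathbb{E}[\sum_{j=0}^{N-1}\ell(x_j,u_j,\theta_j)\mid\mathfrak{F}_0]$ over $(u_0,\dots,u_{N-1})$ subject to $x_{k+1}=f(x_k,u_k,\theta_k)$, $(x_k,u_k)\in Y_{\theta_k}$ ($k=0,\dots,N-1$), $(x_0,\theta_0)=(x,\theta)$, $x_N=x_s^{\mathrm{bet}(\theta_{N-1})}$, $u_k\lhd\mathfrak{F}_k$. Rotated problem $\bar{\mathbb{P}}(x,\theta)$: $\widetilde V_N^\star(x,\theta)=\inf\mathbb{E}[\sum_{j=0}^{N-1}L(x_j,u_j,\theta_j)\mid\mathfrak{F}_0]$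 subject to the same constraints. The receding horizon law is the first element of an optimal policy. *)

theory Defs
  imports "HOL-Analysis.Analysis"
begin

definition lsc :: "('a::topological_space \<Rightarrow> real) \<Rightarrow> bool" where
  "lsc g \<longleftrightarrow> (\<forall>a. closed {z. g z \<le> a})"

definition level_bounded_loc_unif :: "('x::metric_space \<Rightarrow> 'u::metric_space \<Rightarrow> real) \<Rightarrow> bool" where
  "level_bounded_loc_unif g \<longleftrightarrow>
     (\<forall>x0 a. \<exists>V. open V \<and> x0 \<in> V \<and> bounded (\<Union>x\<in>V. {u. g x u \<le> a}))"

fun ptrans :: "('m::finite \<Rightarrow> 'm \<Rightarrow> real) \<Rightarrow> nat \<Rightarrow> 'm \<Rightarrow> 'm \<Rightarrow> real" where
  "ptrans P 0 i j = (if i = j then 1 else 0)"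
| "ptrans P (Suc n) i j = (\<Sum>k\<in>UNIV. ptrans P n i k * P k j)"

definition stochastic :: "('m::finite \<Rightarrow> 'm \<Rightarrow> real) \<Rightarrow> bool" where
  "stochastic P \<longleftrightarrow> (\<forall>i j. 0 \<le> P i j) \<and> (\<forall>i. (\<Sum>j\<in>UNIV. P i j) = 1)"

definition irreducible_chain :: "('m::finite \<Rightarrow> 'm \<Rightarrow> real) \<Rightarrow> bool" where
  "irreducible_chain P \<longleftrightarrow> (\<forall>i j. \<exists>n>0. ptrans P n i j > 0)"

definition aperiodic_chain :: "('m::finite \<Rightarrow> 'm \<Rightarrow> real) \<Rightarrow> bool" where
  "aperiodic_chain P \<longleftrightarrow> (\<forall>i. Gcd {n. n > 0 \<and> ptrans P n i i > 0} = 1)"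

definition cover :: "('m \<Rightarrow> 'm \<Rightarrow> real) \<Rightarrow> 'm \<Rightarrow> 'm set" where
  "cover P i = {j. P i j > 0}"

definition is_bet :: "('m \<Rightarrow> 'm \<Rightarrow> real) \<Rightarrow> ('m \<Rightarrow> 'm) \<Rightarrow> bool" where
  "is_bet P bet \<longleftrightarrow> (\<forall>i. bet i \<in> cover P i \<and> (\<forall>j\<in>cover P i. P i j \<le> P i (bet i)))"

text \<open>A mode history up to time k is stored REVERSED as a list
  [theta_k, ..., theta_1, theta_0] (length k+1). A causal policy
  (u_k measurable w.r.t. F_k) is a function of the history: pi :: 'm list => 'u;
  since x_0 is fixed, the states x_0..x_k are functions of the mode history.\<close>

fun traj :: "('x \<Rightarrow> 'u \<Rightarrow> 'm \<Rightarrow> 'x) \<Rightarrow> 'x \<Rightarrow> ('m list \<Rightarrow> 'u) \<Rightarrow> 'm list \<Rightarrow> 'x" where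
  "traj f x pol (th' # th # h) = f (traj f x pol (th # h)) (pol (th # h)) th"
| "traj f x pol _ = x"

fun pathprob :: "('m \<Rightarrow> 'm \<Rightarrow> real) \<Rightarrow> 'm list \<Rightarrow> real" where
  "pathprob P (th' # th # h) = P th th' * pathprob P (th # h)"
| "pathprob P [th] = 1"
| "pathprob P [] = 0"

definition paths :: "'m \<Rightarrow> nat \<Rightarrow> 'm list set" where
  "paths th k = {h. length h = Suc k \<and> last h = th}"

definition reach :: "('m \<Rightarrow> 'm \<Rightarrow> real) \<Rightarrow> 'm \<Rightarrow> nat \<Rightarrow> 'm list set" where
  "reach P th k = {h \<in> paths th k. pathprob P h > 0}"

definition feasible ::
  "('x \<Rightarrow> 'u \<Rightarrow> 'm \<Rightarrow> 'x) \<Rightarrow> ('m \<Rightarrow> ('x \<times> 'u) set) \<Rightarrow> ('m \<Rightarrow> 'm \<Rightarrow> real) \<Rightarrow>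
   ('m \<Rightarrow> 'm) \<Rightarrow> ('m \<Rightarrow> 'x) \<Rightarrow> nat \<Rightarrow> 'x \<Rightarrow> 'm \<Rightarrow> ('m list \<Rightarrow> 'u) \<Rightarrow> bool" where
  "feasible f Y P bet xs N x th pol \<longleftrightarrow>
     (\<forall>k<N. \<forall>h\<in>reach P th k. (traj f x pol h, pol h) \<in> Y (hd h)) \<and>
     (\<forall>h\<in>reach P th (N - 1). f (traj f x pol h) (pol h) (hd h) = xs (bet (hd h)))"

definition cost ::
  "('x \<Rightarrow> 'u \<Rightarrow> 'm \<Rightarrow> 'x) \<Rightarrow> ('m \<Rightarrow> 'm \<Rightarrow> real) \<Rightarrow> ('x \<Rightarrow> 'u \<Rightarrow> 'm \<Rightarrow> real) \<Rightarrow>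
   nat \<Rightarrow> 'x \<Rightarrow> 'm \<Rightarrow> ('m list \<Rightarrow> 'u) \<Rightarrow> real" where
  "cost f P c N x th pol =
     (\<Sum>k<N. \<Sum>h\<in>paths th k. pathprob P h * c (traj f x pol h) (pol h) (hd h))"

text \<open>Generator: L lambda(x_k,theta_k) = E[lambda(x_{k+1},theta_{k+1}) - lambda(x_k,theta_k) | F_k],
  given the successor state x_{k+1} = xnext.\<close>
definition gen :: "('m::finite \<Rightarrow> 'm \<Rightarrow> real) \<Rightarrow> ('x \<Rightarrow> 'm \<Rightarrow> real) \<Rightarrow> 'x \<Rightarrow> 'x \<Rightarrow> 'm \<Rightarrow> real" where
  "gen P lam x xnext th = (\<Sum>j\<in>UNIV. P th j * lam xnext j) - lam x th"

definition rot_cost ::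
  "('x \<Rightarrow> 'u \<Rightarrow> 'm \<Rightarrow> 'x) \<Rightarrow> ('m::finite \<Rightarrow> 'm \<Rightarrow> real) \<Rightarrow> ('x \<Rightarrow> 'u \<Rightarrow> 'm \<Rightarrow> real) \<Rightarrow>
   ('x \<Rightarrow> 'm \<Rightarrow> real) \<Rightarrow> 'x \<Rightarrow> 'u \<Rightarrow> 'm \<Rightarrow> real" where
  "rot_cost f P l lam x u th = l x u th - gen P lam x (f x u th) th"

definition minimizers ::
  "('x \<Rightarrow> 'u \<Rightarrow> 'm \<Rightarrow> 'x) \<Rightarrow> ('m \<Rightarrow> ('x \<times> 'u) set) \<Rightarrow> ('m \<Rightarrow> 'm \<Rightarrow> real) \<Rightarrow>
   ('m \<Rightarrow> 'm) \<Rightarrow> ('m \<Rightarrow> 'x) \<Rightarrow> ('x \<Rightarrow> 'u \<Rightarrow> 'm \<Rightarrow> real) \<Rightarrow> nat \<Rightarrow> 'x \<Rightarrow> 'm \<Rightarrow>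
   ('m list \<Rightarrow> 'u) set" where
  "minimizers f Y P bet xs c N x th =
     {pol. feasible f Y P bet xs N x th pol \<and>
           (\<forall>pol'. feasible f Y P bet xs N x th pol' \<longrightarrow> cost f P c N x th pol \<le> cost f P c N x th pol')}"

definition optval ::
  "('x \<Rightarrow> 'u \<Rightarrow> 'm \<Rightarrow> 'x) \<Rightarrow> ('m \<Rightarrow> ('x \<times> 'u) set) \<Rightarrow> ('m \<Rightarrow> 'm \<Rightarrow> real) \<Rightarrow>
   ('m \<Rightarrow> 'm) \<Rightarrow> ('m \<Rightarrow> 'x) \<Rightarrow> ('x \<Rightarrow> 'u \<Rightarrow> 'm \<Rightarrow> real) \<Rightarrow> nat \<Rightarrow> 'x \<Rightarrow> 'm \<Rightarrow> real" where
  "optval f Y P bet xs c N x th =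
     Inf {cost f P c N x th pol | pol. feasible f Y P bet xs N x th pol}"

definition opt_steady_state ::
  "('x \<Rightarrow> 'u \<Rightarrow> 'm \<Rightarrow> 'x) \<Rightarrow> ('m \<Rightarrow> ('x \<times> 'u) set) \<Rightarrow> ('x \<Rightarrow> 'u \<Rightarrow> 'm \<Rightarrow> real) \<Rightarrow>
   'm \<Rightarrow> 'x \<Rightarrow> 'u \<Rightarrow> bool" where
  "opt_steady_state f Y l th xs us \<longleftrightarrow>
     f xs us th = xs \<and> (xs, us) \<in> Y th \<and>
     (\<forall>x u. f x u th = x \<and> (x, u) \<in> Y th \<longrightarrow> l xs us th \<le> l x u th)"

end

theory Submission
  imports Defs
begin

text \<open>Summing the generator of \<open>lam\<close> along a trajectory telescopes, so the rotated cost of a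
  policy differs from its original cost by \<open>E[lam(x\<^sub>N, \<theta>\<^sub>N)] - lam(x, \<theta>)\<close>; the terminal constraint
  fixes \<open>x\<^sub>N\<close> on every scenario, so this difference is the same for all feasible policies and
  both problems have the same minimizers. Shifting an optimal policy by one stage and steering
  the terminal steady state \<open>x\<^sub>s\<^bsup>bet(\<theta>\<^sub>N\<^sub>-\<^sub>1)\<^esup>\<close> on to \<open>x\<^sub>s\<^bsup>bet(\<theta>\<^sub>N)\<^esup>\<close> by the controllability input gives a
  feasible policy at every successor mode. With a common equilibrium this last stage costs
  \<open>ls\<close>, so the shifted policy costs \<open>V - L(x, u\<^sub>0, \<theta>) + ls\<close> in expectation, and dissipativity
  gives \<open>L(x, u\<^sub>0, \<theta>) \<ge> ls + rho(x, \<theta>)\<close>.\<close>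

lemma finite_paths: "finite (paths (th::'m::finite) k)"
proof (rule finite_subset)
  show "paths th k \<subseteq> {h. set h \<subseteq> UNIV \<and> length h = Suc k}"
    by (auto simp: paths_def)
  show "finite {h::'m list. set h \<subseteq> UNIV \<and> length h = Suc k}"
    by (rule finite_lists_length_eq) simp
qed

lemma paths_0: "paths th 0 = {[th]}"
  by (auto simp: paths_def length_Suc_conv)

lemma paths_not_Nil: "h \<in> paths th k \<Longrightarrow> h \<noteq> []"
  by (auto simp: paths_def)

lemma sum_paths_Suc:
  "(\<Sum>h\<in>paths (th::'m::finite) (Suc k). F h) = (\<Sum>h\<in>paths th k. \<Sum>j\<in>UNIV. F (j # h))"
proof -
  have eq: "paths th (Suc k) = (\<lambda>(j, h). j # h) ` (UNIV \<times> paths th k)"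
    by (auto simp: paths_def length_Suc_conv image_iff)
  have inj: "inj_on (\<lambda>(j, h). j # h) (UNIV \<times> paths th k)"
    by (auto simp: inj_on_def)
  have "(\<Sum>h\<in>paths th (Suc k). F h) = (\<Sum>j\<in>UNIV. \<Sum>h\<in>paths th k. F (j # h))"
    unfolding eq sum.reindex[OF inj] by (simp add: sum.cartesian_product split_def)
  also have "\<dots> = (\<Sum>h\<in>paths th k. \<Sum>j\<in>UNIV. F (j # h))"
    by (rule sum.swap)
  finally show ?thesis .
qed

lemma sum_paths_Suc_snoc:
  "(\<Sum>h\<in>paths (th::'m::finite) (Suc k). F h) = (\<Sum>j\<in>UNIV. \<Sum>h\<in>paths j k. F (h @ [th]))"
proof -
  have union: "(\<Union>j. paths j k) = {h::'m list. length h = Suc k}"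
    by (auto simp: paths_def)
  have image: "(\<lambda>h. h @ [th]) ` {h::'m list. length h = Suc k} = paths th (Suc k)"
  proof (intro set_eqI iffI)
    fix h assume h: "h \<in> paths th (Suc k)"
    then have "h \<noteq> []" by (cases h) (auto simp: paths_def)
    with h have "h = butlast h @ [th]" "length (butlast h) = Suc k"
      by (auto simp: paths_def)
    then show "h \<in> (\<lambda>h. h @ [th]) ` {h. length h = Suc k}" by blast
  qed (auto simp: paths_def)
  have "(\<Sum>j\<in>UNIV. \<Sum>h\<in>paths j k. F (h @ [th])) = (\<Sum>h\<in>(\<Union>j. paths j k). F (h @ [th]))"
    by (rule sum.UNION_disjoint[symmetric]) (auto simp: finite_paths, auto simp: paths_def)
  also have "\<dots> = (\<Sum>h\<in>paths th (Suc k). F h)"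
    unfolding union image[symmetric] by (subst sum.reindex) (auto simp: inj_on_def)
  finally show ?thesis by simp
qed

lemma pathprob_nonneg: "stochastic P \<Longrightarrow> 0 \<le> pathprob P h"
  by (induction P h rule: pathprob.induct) (auto simp: stochastic_def)

lemma pathprob_Cons: "h \<noteq> [] \<Longrightarrow> pathprob P (j # h) = P (hd h) j * pathprob P h"
  by (cases h) auto

lemma pathprob_snoc: "h \<noteq> [] \<Longrightarrow> pathprob P (h @ [th]) = pathprob P h * P th (last h)"
  by (induction P h rule: pathprob.induct) auto

lemma sum_pathprob_paths:
  fixes P :: "'m::finite \<Rightarrow> 'm \<Rightarrow> real"
  assumes "stochastic P"
  shows "(\<Sum>h\<in>paths th k. pathprob P h) = 1"
proof (induction k)
  case (Suc k)
  have "(\<Sum>h\<in>paths th (Suc k). pathprob P h) = (\<Sum>h\<in>paths th k. pathprob P h * (\<Sum>j\<in>UNIV. P (hd h) j))"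
    by (auto simp: sum_paths_Suc pathprob_Cons paths_not_Nil sum_distrib_left mult_ac intro!: sum.cong)
  with assms Suc show ?case by (simp add: stochastic_def)
qed (simp add: paths_0)

lemma reach_snoc:
  assumes "h \<in> reach P j k" "P th j > 0"
  shows "h @ [th] \<in> reach P th (Suc k)"
proof -
  from assms(1) have "h \<noteq> []" "last h = j" by (auto simp: reach_def paths_def)
  with assms show ?thesis by (auto simp: reach_def paths_def pathprob_snoc)
qed

lemma reach_tl:
  assumes "stochastic P" and g: "g \<in> reach P th (Suc k)"
  shows "tl g \<in> reach P th k"
proof -
  obtain a b t where g_eq: "g = a # b # t"
    using g by (auto simp: reach_def paths_def length_Suc_conv)
  with g have "0 < P b a * pathprob P (b # t)" by (simp add: reach_def)
  moreover have "0 \<le> P b a" using assms(1) by (simp add: stochastic_def)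
  ultimately have "pathprob P (b # t) > 0" by (simp add: zero_less_mult_iff)
  with g g_eq show ?thesis by (auto simp: reach_def paths_def)
qed

lemma traj_Cons: "h \<noteq> [] \<Longrightarrow> traj f x pol (j # h) = f (traj f x pol h) (pol h) (hd h)"
  by (cases h) auto

lemma traj_cong:
  "(\<And>g. length g < length h \<Longrightarrow> pol g = pol' g) \<Longrightarrow> traj f x pol h = traj f x pol' h"
  by (induction f x pol h rule: traj.induct) auto

lemma traj_snoc:
  "h \<noteq> [] \<Longrightarrow> traj f (f x (pol [th]) th) (\<lambda>g. pol (g @ [th])) h = traj f x pol (h @ [th])"
proof (induction h)
  case (Cons a t)
  then show ?case by (cases t) auto
qed simp

lemma cost_nonneg:
  assumes "stochastic P" "\<And>x u t. 0 \<le> c x u t"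
  shows "0 \<le> cost f P c N x th pol"
  unfolding cost_def using assms pathprob_nonneg
  by (intro sum_nonneg mult_nonneg_nonneg) auto

lemma cost_cong:
  assumes "\<And>h. length h \<le> N \<Longrightarrow> pol h = pol' h"
  shows "cost f P c N x th pol = cost f P c N x th pol'"
  unfolding cost_def
proof (intro sum.cong refl)
  fix k h assume "k \<in> {..<N}" "h \<in> paths th k"
  then have "length h \<le> N" by (simp add: paths_def)
  then show "pathprob P h * c (traj f x pol h) (pol h) (hd h)
           = pathprob P h * c (traj f x pol' h) (pol' h) (hd h)"
    using assms by (simp add: traj_cong[of _ pol pol'])
qed

lemma cost_Suc_first_step:
  fixes P :: "'m::finite \<Rightarrow> 'm \<Rightarrow> real"
  shows "cost f P c (Suc M) x th pol
       = c x (pol [th]) th + (\<Sum>j\<in>UNIV. P th j * cost f P c M (f x (pol [th]) th) j (\<lambda>h. pol (h @ [th])))"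
proof -
  let ?x' = "f x (pol [th]) th" and ?pol' = "\<lambda>h. pol (h @ [th])"
  have stage: "(\<Sum>h\<in>paths th (Suc k). pathprob P h * c (traj f x pol h) (pol h) (hd h))
      = (\<Sum>j\<in>UNIV. P th j * (\<Sum>h\<in>paths j k. pathprob P h * c (traj f ?x' ?pol' h) (?pol' h) (hd h)))"
    for k
    unfolding sum_paths_Suc_snoc sum_distrib_left
  proof (intro sum.cong refl)
    fix j :: 'm and h assume "h \<in> paths j k"
    then have "h \<noteq> []" "last h = j" by (auto simp: paths_def)
    then show "pathprob P (h @ [th]) * c (traj f x pol (h @ [th])) (pol (h @ [th])) (hd (h @ [th]))
        = P th j * (pathprob P h * c (traj f ?x' ?pol' h) (?pol' h) (hd h))"
      by (simp add: pathprob_snoc traj_snoc)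
  qed
  show ?thesis
    unfolding cost_def sum.lessThan_Suc_shift stage
    by (simp add: paths_0 sum_distrib_left sum.swap[of _ "{..<M}"])
qed

lemma optval_minimizer:
  "pol \<in> minimizers f Y P bet xs c N x th \<Longrightarrow> optval f Y P bet xs c N x th = cost f P c N x th pol"
  unfolding optval_def minimizers_def by (intro cInf_eq_minimum) auto

lemma optval_le_cost:
  assumes "stochastic P" "\<And>x u t. 0 \<le> c x u t" "feasible f Y P bet xs N x th pol"
  shows "optval f Y P bet xs c N x th \<le> cost f P c N x th pol"
  unfolding optval_def
  using assms cost_nonneg[OF assms(1,2)] by (intro cInf_lower bdd_belowI[of _ 0]) auto

text \<open>Histories are stored latest mode first, so \<open>h @ [th]\<close> is \<open>h\<close> preceded by the initial mode
  \<open>th\<close>; at the last stage the terminal input \<open>c i k\<close> depends on the previous mode \<open>i\<close> and the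
  current mode \<open>k\<close>.\<close>
definition shifted_policy ::
  "nat \<Rightarrow> 'm \<Rightarrow> ('m list \<Rightarrow> 'u) \<Rightarrow> ('m \<Rightarrow> 'm \<Rightarrow> 'u) \<Rightarrow> 'm list \<Rightarrow> 'u" where
  "shifted_policy N th pol c h = (if length h = N then c (hd (tl (h @ [th]))) (hd h) else pol (h @ [th]))"

lemma traj_shifted_policy:
  assumes "h \<noteq> []" "length h \<le> N"
  shows "traj f (f x (pol [th]) th) (shifted_policy N th pol c) h = traj f x pol (h @ [th])"
proof -
  have "traj f (f x (pol [th]) th) (shifted_policy N th pol c) h
      = traj f (f x (pol [th]) th) (\<lambda>g. pol (g @ [th])) h"
    using assms(2) by (intro traj_cong) (simp add: shifted_policy_def)
  with traj_snoc[OF assms(1)] show ?thesis by simp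
qed

locale policy_shift =
  fixes f :: "'x \<Rightarrow> 'u \<Rightarrow> 'm::finite \<Rightarrow> 'x" and Y :: "'m \<Rightarrow> ('x \<times> 'u) set"
    and P :: "'m \<Rightarrow> 'm \<Rightarrow> real" and bet :: "'m \<Rightarrow> 'm" and xs :: "'m \<Rightarrow> 'x"
    and N :: nat and x :: 'x and th :: 'm and pol :: "'m list \<Rightarrow> 'u"
    and c :: "'m \<Rightarrow> 'm \<Rightarrow> 'u" and j :: 'm
  assumes stochastic: "stochastic P"
    and feasible: "feasible f Y P bet xs N x th pol"
    and N_pos: "N > 0"
    and transition: "P th j > 0"
    and steering: "\<And>i k. (xs (bet i), c i k) \<in> Y k \<and> f (xs (bet i)) (c i k) k = xs (bet k)"
begin

abbreviation "x' \<equiv> f x (pol [th]) th"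
abbreviation "pol' \<equiv> shifted_policy N th pol c"

lemma traj_shifted_policy_terminal:
  assumes h: "h \<in> reach P j (N - 1)"
  shows "traj f x' pol' h = xs (bet (hd (tl (h @ [th]))))"
proof -
  have len: "length h = N" "h \<noteq> []" using h N_pos by (auto simp: reach_def paths_def)
  have "h @ [th] \<in> reach P th (Suc (N - 1))" using reach_snoc[OF h transition] .
  then have "tl (h @ [th]) \<in> reach P th (N - 1)" by (rule reach_tl[OF stochastic])
  then have reach: "tl h @ [th] \<in> reach P th (N - 1)" using len by simp
  have "h @ [th] = hd h # (tl h @ [th])" using len by simp
  moreover have "traj f x' pol' h = traj f x pol (h @ [th])"
    using len by (simp add: traj_shifted_policy)
  ultimately have "traj f x' pol' h = traj f x pol (hd h # (tl h @ [th]))" by metis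
  also have "\<dots> = f (traj f x pol (tl h @ [th])) (pol (tl h @ [th])) (hd (tl h @ [th]))"
    by (simp add: traj_Cons)
  also have "\<dots> = xs (bet (hd (tl h @ [th])))"
    using feasible reach by (auto simp: feasible_def)
  finally show ?thesis using len by simp
qed

lemma feasible_shifted_policy: "feasible f Y P bet xs N x' j pol'"
  unfolding feasible_def
proof (intro conjI ballI allI impI)
  fix k h assume k: "k < N" and h: "h \<in> reach P j k"
  show "(traj f x' pol' h, pol' h) \<in> Y (hd h)"
  proof (cases "k = N - 1")
    case True
    with h have "h \<in> reach P j (N - 1)" "length h = N" using N_pos by (auto simp: reach_def paths_def)
    then show ?thesis using steering by (simp add: traj_shifted_policy_terminal shifted_policy_def)
  next
    case False
    with h k have len: "length h < N" "h \<noteq> []" by (auto simp: reach_def paths_def)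
    have "Suc k < N" using False k by simp
    moreover have "h @ [th] \<in> reach P th (Suc k)" using reach_snoc[OF h transition] .
    ultimately have "(traj f x pol (h @ [th]), pol (h @ [th])) \<in> Y (hd (h @ [th]))"
      using feasible by (auto simp: feasible_def)
    then show ?thesis using len by (simp add: traj_shifted_policy shifted_policy_def)
  qed
next
  fix h assume h: "h \<in> reach P j (N - 1)"
  then have "length h = N" using N_pos by (auto simp: reach_def paths_def)
  then show "f (traj f x' pol' h) (pol' h) (hd h) = xs (bet (hd h))"
    using steering by (simp add: traj_shifted_policy_terminal[OF h] shifted_policy_def)
qed

lemma cost_shifted_policy:
  assumes terminal_cost: "\<And>i k. g (xs (bet i)) (c i k) k = a"
  shows "cost f P g N x' j pol' = cost f P g (N - 1) x' j (\<lambda>h. pol (h @ [th])) + a"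
proof -
  have "(\<Sum>h\<in>paths j (N - 1). pathprob P h * g (traj f x' pol' h) (pol' h) (hd h))
      = (\<Sum>h\<in>paths j (N - 1). pathprob P h * a)"
  proof (intro sum.cong refl)
    fix h assume h: "h \<in> paths j (N - 1)"
    show "pathprob P h * g (traj f x' pol' h) (pol' h) (hd h) = pathprob P h * a"
    proof (cases "h \<in> reach P j (N - 1)")
      case True
      moreover from True have "length h = N" using N_pos by (auto simp: reach_def paths_def)
      ultimately show ?thesis
        using terminal_cost by (simp add: traj_shifted_policy_terminal shifted_policy_def)
    next
      case False
      with h pathprob_nonneg[OF stochastic, of h] show ?thesis by (simp add: reach_def)
    qed
  qed
  also have "\<dots> = a" by (simp add: sum_pathprob_paths[OF stochastic] flip: sum_distrib_right)
  finally have "cost f P g N x' j pol' = cost f P g (N - 1) x' j pol' + a"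
    using N_pos by (cases N) (simp_all add: cost_def)
  also have "cost f P g (N - 1) x' j pol' = cost f P g (N - 1) x' j (\<lambda>h. pol (h @ [th]))"
    using N_pos by (intro cost_cong) (auto simp: shifted_policy_def dest: le_less_trans[OF _ diff_less])
  finally show ?thesis .
qed

end

lemma sum_paths_gen:
  fixes P :: "'m::finite \<Rightarrow> 'm \<Rightarrow> real"
  shows "(\<Sum>h\<in>paths th k. pathprob P h * gen P lam (traj f x pol h) (f (traj f x pol h) (pol h) (hd h)) (hd h))
   = (\<Sum>h\<in>paths th (Suc k). pathprob P h * lam (traj f x pol h) (hd h))
     - (\<Sum>h\<in>paths th k. pathprob P h * lam (traj f x pol h) (hd h))"
proof -
  have "(\<Sum>h\<in>paths th (Suc k). pathprob P h * lam (traj f x pol h) (hd h))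
     = (\<Sum>h\<in>paths th k. pathprob P h * (\<Sum>j\<in>UNIV. P (hd h) j * lam (f (traj f x pol h) (pol h) (hd h)) j))"
    by (auto simp: sum_paths_Suc pathprob_Cons traj_Cons paths_not_Nil sum_distrib_left mult_ac
        intro!: sum.cong)
  then show ?thesis
    by (simp add: gen_def right_diff_distrib sum_subtractf)
qed

lemma cost_minus_rot_cost:
  fixes P :: "'m::finite \<Rightarrow> 'm \<Rightarrow> real"
  assumes "stochastic P" "feasible f Y P bet xs N x th pol" "N > 0"
  shows "cost f P l N x th pol - cost f P (rot_cost f P l lam) N x th pol
     = (\<Sum>h\<in>paths th (N - 1). pathprob P h * (\<Sum>j\<in>UNIV. P (hd h) j * lam (xs (bet (hd h))) j)) - lam x th"
proof -
  define Phi where "Phi k = (\<Sum>h\<in>paths th k. pathprob P h * lam (traj f x pol h) (hd h))" for k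
  have "cost f P l N x th pol - cost f P (rot_cost f P l lam) N x th pol = (\<Sum>k<N. Phi (Suc k) - Phi k)"
    unfolding cost_def rot_cost_def Phi_def
    by (simp add: sum_paths_gen[symmetric] sum_subtractf[symmetric] right_diff_distrib)
  also have "\<dots> = Phi N - Phi 0" by (rule sum_lessThan_telescope)
  also have "Phi 0 = lam x th" by (simp add: Phi_def paths_0)
  also have "Phi N = (\<Sum>h\<in>paths th (N - 1). \<Sum>j\<in>UNIV. pathprob P (j # h) * lam (traj f x pol (j # h)) j)"
    using assms(3) unfolding Phi_def by (cases N) (simp_all add: sum_paths_Suc)
  also have "\<dots> = (\<Sum>h\<in>paths th (N - 1). pathprob P h * (\<Sum>j\<in>UNIV. P (hd h) j * lam (xs (bet (hd h))) j))"
  proof (intro sum.cong refl)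
    fix h assume h: "h \<in> paths th (N - 1)"
    show "(\<Sum>j\<in>UNIV. pathprob P (j # h) * lam (traj f x pol (j # h)) j)
        = pathprob P h * (\<Sum>j\<in>UNIV. P (hd h) j * lam (xs (bet (hd h))) j)"
    proof (cases "pathprob P h > 0")
      case True
      with h assms(2) have "f (traj f x pol h) (pol h) (hd h) = xs (bet (hd h))"
        by (auto simp: feasible_def reach_def)
      with h show ?thesis by (auto simp: pathprob_Cons traj_Cons paths_not_Nil sum_distrib_left mult_ac)
    next
      case False
      with pathprob_nonneg[OF assms(1), of h] have "pathprob P h = 0" by simp
      with h show ?thesis by (simp add: pathprob_Cons paths_not_Nil)
    qed
  qed
  finally show ?thesis .
qed

lemma minimizers_rot_cost:
  fixes P :: "'m::finite \<Rightarrow> 'm \<Rightarrow> real"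
  assumes "stochastic P" "N > 0"
  shows "minimizers f Y P bet xs (rot_cost f P l lam) N x th = minimizers f Y P bet xs l N x th"
proof -
  define C where "C = (\<Sum>h\<in>paths th (N - 1). pathprob P h * (\<Sum>j\<in>UNIV. P (hd h) j * lam (xs (bet (hd h))) j)) - lam x th"
  have "cost f P (rot_cost f P l lam) N x th pol = cost f P l N x th pol - C"
    if "feasible f Y P bet xs N x th pol" for pol
    using cost_minus_rot_cost[OF assms(1) that assms(2), of l lam] by (simp add: C_def)
  then show ?thesis unfolding minimizers_def by auto
qed

lemma gen_eq_0_if_constant:
  assumes "stochastic P" "\<And>j. lam y j = lam x th"
  shows "gen P lam x y th = 0"
  using assms by (simp add: gen_def stochastic_def flip: sum_distrib_right)

lemma rot_optval_decrease:
  fixes P :: "'m::finite \<Rightarrow> 'm \<Rightarrow> real"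
  assumes stochastic: "stochastic P" and N_pos: "N > 0"
    and equilibrium: "\<And>t. f 0 0 t = 0 \<and> (0, 0) \<in> Y t \<and> xs t = 0 \<and> l 0 0 t = ls"
    and lam_0: "\<And>t t'. lam 0 t = lam 0 t'"
    and rho_nonneg: "\<And>x t. 0 \<le> rho x t"
    and ls_nonneg: "0 \<le> ls"
    and dissipative: "\<And>x u t. gen P lam x (f x u t) t \<le> l x u t - ls - rho x t"
    and pol: "pol \<in> minimizers f Y P bet xs (rot_cost f P l lam) N x th"
  shows "(\<Sum>j\<in>UNIV. P th j * optval f Y P bet xs (rot_cost f P l lam) N (f x (pol [th]) th) j)
            - optval f Y P bet xs (rot_cost f P l lam) N x th \<le> - rho x th"
proof -
  let ?L = "rot_cost f P l lam" and ?x' = "f x (pol [th]) th"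
  let ?V = "optval f Y P bet xs ?L N" and ?W = "\<lambda>j. cost f P ?L (N - 1) ?x' j (\<lambda>h. pol (h @ [th]))"
  have L_lower: "ls + rho a t \<le> ?L a b t" for a b t
    using dissipative[of a b t] by (simp add: rot_cost_def)
  have L_nonneg: "\<And>a b t. 0 \<le> ?L a b t"
    using L_lower ls_nonneg rho_nonneg by (meson add_nonneg_nonneg order_trans)
  have L_equilibrium: "?L 0 0 t = ls" for t
    using equilibrium gen_eq_0_if_constant[OF stochastic, of lam 0 0 t] lam_0 by (simp add: rot_cost_def)
  have feasible: "feasible f Y P bet xs N x th pol" using pol by (simp add: minimizers_def)
  have V_first_step: "?V x th = ?L x (pol [th]) th + (\<Sum>j\<in>UNIV. P th j * ?W j)"
    using optval_minimizer[OF pol] cost_Suc_first_step[of f P ?L "N - 1"] N_pos by simp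
  have V_successor: "P th j * ?V ?x' j \<le> P th j * (?W j + ls)" for j
  proof (cases "P th j > 0")
    case True
    interpret policy_shift f Y P bet xs N x th pol "\<lambda>i t. 0" j
      using stochastic feasible N_pos True equilibrium by unfold_locales auto
    have "?V ?x' j \<le> cost f P ?L N ?x' j pol'"
      using optval_le_cost[where c = ?L, OF stochastic L_nonneg feasible_shifted_policy] .
    also have "\<dots> = ?W j + ls"
      using equilibrium L_equilibrium by (intro cost_shifted_policy) simp
    finally have "?V ?x' j \<le> ?W j + ls" .
    with True show ?thesis by simp
  qed (use stochastic in \<open>simp add: stochastic_def antisym_conv2\<close>)
  have "(\<Sum>j\<in>UNIV. P th j * ?V ?x' j) \<le> (\<Sum>j\<in>UNIV. P th j * (?W j + ls))"
    by (rule sum_mono) (rule V_successor)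
  also have "\<dots> = ?V x th - ?L x (pol [th]) th + ls"
    using stochastic by (simp add: V_first_step distrib_left sum.distrib stochastic_def flip: sum_distrib_right)
  finally show ?thesis using L_lower[of x th "pol [th]"] by simp
qed

theorem lemma2:
  fixes f :: "'x::euclidean_space \<Rightarrow> 'u::euclidean_space \<Rightarrow> 'm::finite \<Rightarrow> 'x"
    and l :: "'x \<Rightarrow> 'u \<Rightarrow> 'm \<Rightarrow> real"
    and Y :: "'m \<Rightarrow> ('x \<times> 'u) set"
    and P :: "'m \<Rightarrow> 'm \<Rightarrow> real"
    and bet :: "'m \<Rightarrow> 'm"
    and xs :: "'m \<Rightarrow> 'x" and us :: "'m \<Rightarrow> 'u"
    and lam :: "'x \<Rightarrow> 'm \<Rightarrow> real" and rho :: "'x \<Rightarrow> 'm \<Rightarrow> real" and ls :: real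
    and N :: nat
  assumes N_pos: "N > 0"
    (* well-posedness *)
    and l_nonneg: "\<forall>x u th. 0 \<le> l x u th"
    and l_lsc: "\<forall>th. lsc (\<lambda>(x, u). l x u th)"
    and l_lvlbdd: "\<forall>th. level_bounded_loc_unif (\<lambda>x u. l x u th)"
    and f_cont: "\<forall>th. continuous_on UNIV (\<lambda>(x, u). f x u th)"
    and Y_cpt: "\<forall>th. compact (Y th) \<and> Y th \<noteq> {}"
    and P_stoch: "stochastic P"
    and P_irred: "irreducible_chain P"
    and P_aper: "aperiodic_chain P"
    and bet_def: "is_bet P bet"
    and ss_opt: "\<forall>th. opt_steady_state f Y l th (xs th) (us th)"
    (* controllability *)
    and ctrl: "\<forall>i j. \<exists>u. (xs i, u) \<in> Y j \<and> f (xs i) u j = xs (bet j)"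
  shows
    \<comment> \<open>recursive feasibility of the rotated problem along the closed loop\<close>
    "(\<forall>x th pol. pol \<in> minimizers f Y P bet xs (rot_cost f P l lam) N x th \<longrightarrow>
        (\<forall>j\<in>cover P th. \<exists>pol'. feasible f Y P bet xs N (f x (pol [th]) th) j pol'))
     \<and>
     \<comment> \<open>same minimizers as the original problem\<close>
     (\<forall>x th. minimizers f Y P bet xs (rot_cost f P l lam) N x th
             = minimizers f Y P bet xs l N x th)
     \<and>
     \<comment> \<open>under strict stochastic dissipativity: decrease of the rotated value function\<close>
     ((\<forall>th. xs th = 0 \<and> us th = 0 \<and> l 0 0 th = ls) \<and>
      (\<forall>th. lsc (\<lambda>x. lam x th)) \<and> (\<forall>th th'. lam 0 th = lam 0 th') \<and>
      (\<forall>th. convex_on UNIV (\<lambda>x. rho x th)) \<and>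
      (\<forall>x th. 0 \<le> rho x th) \<and> (\<forall>th. rho 0 th = 0) \<and> (\<forall>x th. x \<noteq> 0 \<longrightarrow> rho x th > 0) \<and>
      (\<forall>x u th. gen P lam x (f x u th) th \<le> l x u th - ls - rho x th)
      \<longrightarrow>
      (\<forall>x th pol. pol \<in> minimizers f Y P bet xs (rot_cost f P l lam) N x th \<longrightarrow>
          (\<Sum>j\<in>UNIV. P th j * optval f Y P bet xs (rot_cost f P l lam) N (f x (pol [th]) th) j)
            - optval f Y P bet xs (rot_cost f P l lam) N x th \<le> - rho x th))"
proof (intro conjI impI allI ballI)
  fix x th pol j
  assume "pol \<in> minimizers f Y P bet xs (rot_cost f P l lam) N x th" and "j \<in> cover P th"
  moreover define c where "c i k = (SOME u. (xs (bet i), u) \<in> Y k \<and> f (xs (bet i)) u k = xs (bet k))" for i k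
  moreover have "(xs (bet i), c i k) \<in> Y k \<and> f (xs (bet i)) (c i k) k = xs (bet k)" for i k
    unfolding c_def by (rule someI_ex) (use ctrl in blast)
  ultimately interpret policy_shift f Y P bet xs N x th pol c j
    using P_stoch N_pos by unfold_locales (auto simp: minimizers_def cover_def)
  show "\<exists>pol'. feasible f Y P bet xs N (f x (pol [th]) th) j pol'"
    using feasible_shifted_policy by blast
next
  fix x th
  show "minimizers f Y P bet xs (rot_cost f P l lam) N x th = minimizers f Y P bet xs l N x th"
    using minimizers_rot_cost[OF P_stoch N_pos] .
next
  fix x th pol
  assume dissipativity: "(\<forall>th. xs th = 0 \<and> us th = 0 \<and> l 0 0 th = ls) \<and>
      (\<forall>th. lsc (\<lambda>x. lam x th)) \<and> (\<forall>th th'. lam 0 th = lam 0 th') \<and>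
      (\<forall>th. convex_on UNIV (\<lambda>x. rho x th)) \<and>
      (\<forall>x th. 0 \<le> rho x th) \<and> (\<forall>th. rho 0 th = 0) \<and> (\<forall>x th. x \<noteq> 0 \<longrightarrow> rho x th > 0) \<and>
      (\<forall>x u th. gen P lam x (f x u th) th \<le> l x u th - ls - rho x th)"
    and pol: "pol \<in> minimizers f Y P bet xs (rot_cost f P l lam) N x th"
  have equilibrium: "f 0 0 t = 0 \<and> (0, 0) \<in> Y t \<and> xs t = 0 \<and> l 0 0 t = ls" for t
    using ss_opt dissipativity by (auto simp: opt_steady_state_def)
  have "0 \<le> ls" using dissipativity l_nonneg by metis
  with dissipativity show "(\<Sum>j\<in>UNIV. P th j * optval f Y P bet xs (rot_cost f P l lam) N (f x (pol [th]) th) j)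
            - optval f Y P bet xs (rot_cost f P l lam) N x th \<le> - rho x th"
    by (intro rot_optval_decrease[OF P_stoch N_pos equilibrium _ _ _ _ pol]) auto
qed

end
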